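(* Let $q$ be an odd prime power, $n=\frac{q+1}{2}$ and $\delta$ an integer with $2\leq\delta\leq\lfloor\frac{q+3}{4}\rfloor$. Then the negacyclic BCH code $\mathcal{C}_{(q,n,\delta,0)}$ has parameters $[n,n-2(\delta-1),2\delta-1]$. All of these codes are MDS.
   Context: Let $\ell$ be the order of $q$ modulo $2n$, $\alpha$ a primitive element of $\mathrm{GF}(q^\ell)$, $\beta=\alpha^{(q^\ell-1)/(2n)}$ (a primitive $2n$-th root of unity), and $\mathbb{M}_{\beta^j}(x)$ the minimal polynomial of $\beta^j$ over $\mathrm{GF}(q)$. For $2\leq\delta\leq n$, $\mathcal{C}_{(q,n,\delta,0)}$ is the negacyclic code of length $n$ over $\mathrm{GF}(q)$ (ideal of $\mathrm{GF}(q)[x]/(x^n+1)$) generated by $\mathrm{lcm}\big(\mathbb{M}_{\beta^{1}}(x),\mathbb{M}_{\beta^{3}}(x),\ldots,\mathbb{M}_{\beta^{1+2(\delta-2)}}(x)\big)$. An $[n,k,d]$ code is MDS if $d=n-k+1$. *)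

theory Defs
  imports "HOL-Computational_Algebra.Polynomial_Factorial" "HOL-Library.Cardinality"
begin

definition mult_ord :: "nat \<Rightarrow> nat \<Rightarrow> nat" where
  "mult_ord m q = (if coprime m q then (LEAST d. d > 0 \<and> q ^ d mod m = 1 mod m) else 0)"

definition field_hom :: "('a::field \<Rightarrow> 'b::field) \<Rightarrow> bool" where
  "field_hom \<phi> \<longleftrightarrow> \<phi> 0 = 0 \<and> \<phi> 1 = 1 \<and> (\<forall>x y. \<phi> (x + y) = \<phi> x + \<phi> y) \<and>
     (\<forall>x y. \<phi> (x * y) = \<phi> x * \<phi> y)"

definition primitive_element :: "'b::field \<Rightarrow> bool" where
  "primitive_element \<alpha> \<longleftrightarrow> \<alpha> \<noteq> 0 \<and> (\<forall>y. y \<noteq> 0 \<longrightarrow> (\<exists>k::nat. y = \<alpha> ^ k))"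

definition min_poly :: "('a::field \<Rightarrow> 'b::field) \<Rightarrow> 'b \<Rightarrow> 'a poly" where
  "min_poly \<phi> x = (THE m. lead_coeff m = 1 \<and> poly (map_poly \<phi> m) x = 0 \<and>
      (\<forall>m'. m' \<noteq> 0 \<and> poly (map_poly \<phi> m') x = 0 \<longrightarrow> degree m \<le> degree m'))"

text \<open>Negacyclic BCH code C_(q,n,delta,0): the ideal of GF(q)[x]/(x^n+1) generated by
  lcm(M_{beta^1}, M_{beta^3}, ..., M_{beta^(1+2(delta-2))}); elements of the quotient
  ring are represented by their reduced representatives of degree < n (i.e. the
  coefficient vectors (c_0,...,c_{n-1})).\<close>
definition negacyclic_generator :: "('a::field_gcd \<Rightarrow> 'b::field) \<Rightarrow> 'b \<Rightarrow> nat \<Rightarrow> 'a poly" where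
  "negacyclic_generator \<phi> \<beta> \<delta> =
     Lcm ((\<lambda>i. min_poly \<phi> (\<beta> ^ (1 + 2 * i))) ` {0..\<delta> - 2})"

definition negacyclic_BCH :: "('a::field_gcd \<Rightarrow> 'b::field) \<Rightarrow> 'b \<Rightarrow> nat \<Rightarrow> nat \<Rightarrow> 'a poly set" where
  "negacyclic_BCH \<phi> \<beta> n \<delta> =
     {(a * negacyclic_generator \<phi> \<beta> \<delta>) mod (monom 1 n + 1) | a. True}"

definition hamming_dist :: "'a::zero poly \<Rightarrow> 'a poly \<Rightarrow> nat" where
  "hamming_dist c c' = card {i. coeff c i \<noteq> coeff c' i}"

definition min_dist :: "'a::zero poly set \<Rightarrow> nat" where
  "min_dist C = Min {hamming_dist c c' | c c'. c \<in> C \<and> c' \<in> C \<and> c \<noteq> c'}"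

definition code_dim :: "'a::field_gcd poly set \<Rightarrow> nat" where
  "code_dim C = vector_space.dim (smult :: 'a \<Rightarrow> 'a poly \<Rightarrow> 'a poly) C"

end

theory Submission
  imports Defs
begin

(*
  Here 2n = q + 1, so q has order 2 modulo 2n, the extension field has q^2 elements and
  beta has multiplicative order q + 1; hence beta^q = beta^-1.  For 0 < i < n the power beta^i
  is not fixed by x |-> x^q, so it lies outside GF(q) and its minimal polynomial is the
  quadratic (x - beta^i)(x - beta^-i), whose middle coefficient is fixed by x |-> x^q and thus
  lies in GF(q).  The generator is therefore the product of the d - 1 quadratics for the odd
  exponents 1, 3, ..., 2d - 3 (d = delta), and its 2d - 2 roots beta^-(2d-3), ..., beta^-1,
  beta, ..., beta^(2d-3) are consecutive powers of beta^2, an element of order n.  The BCH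
  bound (a Vandermonde argument) shows that every nonzero codeword has weight at least
  2d - 1, which the generator itself attains, and the dimension is n - deg g = n - 2(d - 1).
*)

section \<open>Finite fields\<close>

lemma power_eq_power_mod:
  fixes a :: "'a::monoid_mult"
  assumes "a ^ r = 1"
  shows "a ^ k = a ^ (k mod r)"
proof -
  have "a ^ k = (a ^ r) ^ (k div r) * a ^ (k mod r)"
    by (simp flip: power_mult power_add)
  with assms show ?thesis by simp
qed

lemma card_field_ge_2: "2 \<le> CARD('a::{field,finite})"
  using card_mono[of UNIV "{0::'a, 1}"] by simp

lemma power_card_minus_1_eq_1:
  fixes x :: "'a::{field,finite}"
  assumes "x \<noteq> 0"
  shows "x ^ (CARD('a) - 1) = 1"
proof -
  let ?U = "UNIV - {0::'a}"
  have "(\<Prod>y\<in>?U. x * y) = (\<Prod>y\<in>?U. y)"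
    by (rule prod.reindex_bij_witness[of _ "\<lambda>y. y / x" "\<lambda>y. x * y"]) (use assms in auto)
  moreover have "(\<Prod>y\<in>?U. x * y) = x ^ card ?U * (\<Prod>y\<in>?U. y)"
    by (simp add: prod.distrib)
  moreover have "(\<Prod>y\<in>?U. y) \<noteq> 0" by simp
  ultimately show ?thesis by (simp add: card_Diff_singleton)
qed

lemma power_card_eq_self:
  fixes x :: "'a::{field,finite}"
  shows "x ^ CARD('a) = x"
proof (cases "x = 0")
  case False
  have "CARD('a) = Suc (CARD('a) - 1)" using finite_UNIV_card_ge_0[where 'a='a] by simp
  then show ?thesis using power_card_minus_1_eq_1[OF False] by (metis power_Suc mult_1_right)
qed simp

lemma primitive_element_power_eq_1_iff:
  fixes \<alpha> :: "'a::{field,finite}"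
  assumes "primitive_element \<alpha>"
  shows "\<alpha> ^ m = 1 \<longleftrightarrow> (CARD('a) - 1) dvd m"
proof
  define N where "N = CARD('a) - 1"
  have "\<alpha> \<noteq> 0" using assms by (simp add: primitive_element_def)
  then have period: "\<alpha> ^ k = \<alpha> ^ (k mod N)" for k
    unfolding N_def by (intro power_eq_power_mod power_card_minus_1_eq_1)
  assume "\<alpha> ^ m = 1"
  then have r: "\<alpha> ^ (m mod N) = 1" by (metis period)
  show "N dvd m"
  proof (rule ccontr)
    assume "\<not> N dvd m"
    then have "0 < m mod N" by (simp add: mod_greater_zero_iff_not_dvd)
    have "UNIV - {0} \<subseteq> power \<alpha> ` {..<m mod N}"
    proof
      fix y :: 'a assume "y \<in> UNIV - {0}"
      then obtain k where "y = \<alpha> ^ k" using assms by (auto simp: primitive_element_def)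
      then have "y = \<alpha> ^ (k mod (m mod N))" using r power_eq_power_mod by metis
      then show "y \<in> power \<alpha> ` {..<m mod N}" using \<open>0 < m mod N\<close> by auto
    qed
    then have "N \<le> m mod N"
      using surj_card_le[OF finite_lessThan] by (fastforce simp: N_def card_Diff_singleton)
    moreover have "0 < N" using card_field_ge_2[where 'a='a] by (simp add: N_def)
    ultimately show False using mod_less_divisor not_le by blast
  qed
next
  assume "(CARD('a) - 1) dvd m"
  then obtain k where "m = (CARD('a) - 1) * k" ..
  then show "\<alpha> ^ m = 1"
    using assms power_card_minus_1_eq_1[of \<alpha>] by (simp add: primitive_element_def power_mult)
qed

lemma primitive_element_power_order:
  fixes \<alpha> :: "'a::{field,finite}"
  assumes "primitive_element \<alpha>" "CARD('a) - 1 = m * d"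
  shows "(\<alpha> ^ m) ^ j = 1 \<longleftrightarrow> d dvd j"
proof -
  have "m \<noteq> 0"
  proof
    assume "m = 0"
    with assms(2) card_field_ge_2[where 'a='a] show False by simp
  qed
  then show ?thesis
    using primitive_element_power_eq_1_iff[OF assms(1), of "m * j"] assms(2)
    by (simp add: power_mult)
qed

text \<open>The size of the field is not known to be a power of its characteristic here, so the
  vanishing of the binomial coefficients is read off the polynomial (x + 1)^Q - x^Q - 1, which
  has degree less than Q but vanishes at all Q points.\<close>

lemma of_nat_card_choose_eq_0:
  assumes "0 < k" "k < CARD('a::{field,finite})"
  shows "(of_nat (CARD('a) choose k) :: 'a) = 0"
proof -
  define Q where "Q = CARD('a)"
  have "Q \<ge> 2" unfolding Q_def by (rule card_field_ge_2)
  define R :: "'a poly" where "R = [:1, 1:] ^ Q - monom 1 Q - 1"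
  have coeff_R: "coeff R k = of_nat (Q choose k)" if "0 < k" "k < Q" for k
    using that by (simp add: R_def coeff_linear_poly_power coeff_monom)
  have "R = 0"
  proof (rule ccontr)
    assume "R \<noteq> 0"
    have "\<forall>x. poly R x = 0"
      by (simp add: R_def poly_monom power_card_eq_self Q_def add.commute)
    then have "Q \<le> degree R"
      using card_poly_roots_bound[OF \<open>R \<noteq> 0\<close>] by (simp add: Q_def)
    moreover have "degree R \<le> Q"
      unfolding R_def by (intro degree_diff_le) (auto simp: degree_linear_power degree_monom_le)
    moreover have "coeff R Q = 0"
      using \<open>Q \<ge> 2\<close> by (simp add: R_def coeff_linear_poly_power)
    ultimately show False using \<open>R \<noteq> 0\<close> by (metis le_antisym leading_coeff_0_iff)
  qed
  then show ?thesis using coeff_R[of k] assms by (simp add: Q_def)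
qed

section \<open>Polynomial codes\<close>

definition hamming_weight :: "'a::zero poly \<Rightarrow> nat" where
  "hamming_weight p = card {i. coeff p i \<noteq> 0}"

lemma hamming_dist_eq_weight_diff:
  fixes c c' :: "'a::ab_group_add poly"
  shows "hamming_dist c c' = hamming_weight (c - c')"
  by (simp add: hamming_dist_def hamming_weight_def)

lemma hamming_weight_le_Suc_degree: "hamming_weight p \<le> Suc (degree p)"
proof -
  have "{i. coeff p i \<noteq> 0} \<subseteq> {..degree p}" using le_degree by auto
  then show ?thesis unfolding hamming_weight_def using card_mono[of "{..degree p}"] by fastforce
qed

lemma min_dist_eqI:
  fixes C :: "'a::ab_group_add poly set"
  assumes diff_closed: "\<And>c c'. c \<in> C \<Longrightarrow> c' \<in> C \<Longrightarrow> c - c' \<in> C"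
    and bounded: "\<And>c. c \<in> C \<Longrightarrow> degree c < n"
    and witness: "w \<in> C" "w \<noteq> 0" "hamming_weight w = d"
    and lower: "\<And>c. c \<in> C \<Longrightarrow> c \<noteq> 0 \<Longrightarrow> d \<le> hamming_weight c"
  shows "min_dist C = d"
proof -
  define D where "D = {hamming_dist c c' | c c'. c \<in> C \<and> c' \<in> C \<and> c \<noteq> c'}"
  have D_weights: "D = {hamming_weight (c - c') | c c'. c \<in> C \<and> c' \<in> C \<and> c \<noteq> c'}"
    by (simp add: D_def hamming_dist_eq_weight_diff)
  have "0 \<in> C" using diff_closed[OF witness(1) witness(1)] by simp
  then have "d \<in> D" using witness by (force simp: D_weights)
  moreover have "d \<le> x" if "x \<in> D" for x
    using that lower diff_closed by (auto simp: D_weights)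
  moreover have "D \<subseteq> {..n}"
  proof
    fix x assume "x \<in> D"
    then obtain c c' where "c \<in> C" "c' \<in> C" "x = hamming_weight (c - c')"
      by (auto simp: D_weights)
    then show "x \<in> {..n}"
      using bounded[OF diff_closed] hamming_weight_le_Suc_degree[of "c - c'"] by fastforce
  qed
  ultimately show ?thesis
    unfolding min_dist_def D_def[symmetric] by (intro Min_eqI) (auto intro: finite_subset)
qed

lemma vandermonde_kernel_trivial:
  fixes f a :: "'b \<Rightarrow> 'a::field"
  assumes "finite S" "inj_on f S" "t \<in> S"
    and eqs: "\<And>k. k < card S \<Longrightarrow> (\<Sum>s\<in>S. a s * f s ^ k) = 0"
  shows "a t = 0"
proof -
  define L where "L = (\<Prod>s\<in>S - {t}. [:- f s, 1:])"
  have "degree L = card (S - {t})"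
    unfolding L_def by (subst degree_prod_eq_sum_degree) auto
  then have deg_L: "degree L < card S"
    using card_Diff1_less[OF assms(1,3)] by simp
  have "(\<Sum>s\<in>S. a s * poly L (f s)) = (\<Sum>k\<le>degree L. coeff L k * (\<Sum>s\<in>S. a s * f s ^ k))"
    unfolding poly_altdef by (simp add: sum_distrib_left sum.swap[of _ S] mult_ac)
  also have "\<dots> = 0" using eqs deg_L by simp
  finally have "(\<Sum>s\<in>S. a s * poly L (f s)) = 0" .
  moreover have "poly L (f s) = 0" if "s \<in> S - {t}" for s
    using that assms(1) by (auto simp: L_def poly_prod)
  ultimately have "a t * poly L (f t) = 0"
    using sum.remove[OF assms(1,3), of "\<lambda>s. a s * poly L (f s)"] by simp
  moreover have "poly L (f t) \<noteq> 0"
    using assms(1-3) by (auto simp: L_def poly_prod inj_on_def)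
  ultimately show ?thesis by simp
qed

lemma poly_eq_sum_over_support:
  fixes x :: "'a::comm_semiring_1"
  shows "poly p x = (\<Sum>i\<in>{i. coeff p i \<noteq> 0}. coeff p i * x ^ i)"
  unfolding poly_altdef by (rule sum.mono_neutral_right) (auto simp: le_degree)

lemma bch_bound:
  fixes p :: "'a::field poly"
  assumes inj: "inj_on (\<lambda>i. \<zeta> ^ i) {..<n}" and "degree p < n" "p \<noteq> 0" "\<gamma> \<noteq> 0"
    and roots: "\<And>k. k < d \<Longrightarrow> poly p (\<gamma> * \<zeta> ^ k) = 0"
  shows "d < hamming_weight p"
proof (rule ccontr)
  define S where "S = {i. coeff p i \<noteq> 0}"
  assume "\<not> d < hamming_weight p"
  then have "card S \<le> d" by (simp add: S_def hamming_weight_def)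
  have "S \<subseteq> {..<n}" using le_degree assms(2) by (fastforce simp: S_def)
  then have "finite S" by (rule finite_subset) simp
  have "coeff p (degree p) * \<gamma> ^ degree p = 0"
  proof (rule vandermonde_kernel_trivial[of S "\<lambda>i. \<zeta> ^ i"])
    show "finite S" by fact
    show "inj_on (\<lambda>i. \<zeta> ^ i) S" using inj \<open>S \<subseteq> _\<close> by (rule inj_on_subset)
    show "degree p \<in> S" using \<open>p \<noteq> 0\<close> by (simp add: S_def)
    fix k assume "k < card S"
    have "(\<Sum>s\<in>S. coeff p s * \<gamma> ^ s * (\<zeta> ^ s) ^ k) = poly p (\<gamma> * \<zeta> ^ k)"
      unfolding poly_eq_sum_over_support S_def
      by (simp add: power_mult_distrib mult.assoc flip: power_mult) (simp add: mult.commute)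
    also have "\<dots> = 0" using roots \<open>k < card S\<close> \<open>card S \<le> d\<close> by simp
    finally show "(\<Sum>s\<in>S. coeff p s * \<gamma> ^ s * (\<zeta> ^ s) ^ k) = 0" .
  qed
  then show False using assms(3,4) by simp
qed

lemma mod_multiples_eq_bounded_multiples:
  fixes g f :: "'a::field poly"
  assumes "g dvd f" "0 < degree f"
  shows "{(a * g) mod f | a. True} = {c. g dvd c \<and> degree c < degree f}"
proof (intro set_eqI iffI)
  fix c assume "c \<in> {(a * g) mod f | a. True}"
  then obtain a where c: "c = (a * g) mod f" by blast
  have "f \<noteq> 0" using assms(2) by auto
  then show "c \<in> {c. g dvd c \<and> degree c < degree f}"
    using assms c degree_mod_less[of f "a * g"] by (cases "c = 0") (auto intro: dvd_mod)
next
  fix c assume "c \<in> {c. g dvd c \<and> degree c < degree f}"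
  then have "g dvd c" "degree c < degree f" by auto
  from \<open>g dvd c\<close> obtain b where "c = g * b" ..
  with \<open>degree c < degree f\<close> have "c = (b * g) mod f" by (simp add: mod_poly_less mult.commute)
  then show "c \<in> {(a * g) mod f | a. True}" by blast
qed

interpretation poly_vs: vector_space "smult :: 'a::field \<Rightarrow> 'a poly \<Rightarrow> 'a poly"
  by unfold_locales (simp_all add: smult_add_right smult_add_left)

lemma inj_on_shifted_multiples:
  fixes g :: "'a::field poly"
  assumes "g \<noteq> 0"
  shows "inj_on (\<lambda>k. g * monom 1 k) K"
  by (rule inj_onI) (use assms in \<open>simp add: monom_eq_iff'\<close>)

lemma poly_vs_span_shifted_multiples:
  fixes g :: "'a::field poly"
  assumes "g \<noteq> 0" "degree g < n"
  shows "poly_vs.span ((\<lambda>k. g * monom 1 k) ` {..<n - degree g}) = {c. g dvd c \<and> degree c < n}"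
    (is "poly_vs.span ?B = ?C")
proof
  have multiple_as_combination: "g * b = (\<Sum>k<n - degree g. smult (coeff b k) (g * monom 1 k))"
    if "degree b < n - degree g" for b
  proof -
    have "b = (\<Sum>k<n - degree g. monom (coeff b k) k)"
      using that by (intro poly_eqI) (auto simp: coeff_sum coeff_monom coeff_eq_0)
    then show ?thesis
      by (simp add: smult_monom flip: mult_smult_right) (metis sum_distrib_left)
  qed
  show "?C \<subseteq> poly_vs.span ?B"
  proof
    fix c assume "c \<in> ?C"
    then obtain b where c: "c = g * b" "degree c < n" by blast
    show "c \<in> poly_vs.span ?B"
    proof (cases "b = 0")
      case False
      then have "degree b < n - degree g" using c assms by (auto simp: degree_mult_eq)
      then show ?thesis unfolding c(1) multiple_as_combination[OF \<open>degree b < _\<close>]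
        by (intro poly_vs.span_sum poly_vs.span_scale poly_vs.span_base) auto
    qed (simp add: c poly_vs.span_zero)
  qed
  have "poly_vs.subspace ?C"
    by (rule poly_vs.subspaceI) (use assms(2) in \<open>auto intro: degree_add_le_max[THEN le_less_trans]
        degree_smult_le[THEN le_less_trans] simp: dvd_smult\<close>)
  moreover have "?B \<subseteq> ?C" using assms by (auto simp: degree_mult_eq degree_monom_eq)
  ultimately show "poly_vs.span ?B \<subseteq> ?C" by (rule poly_vs.span_minimal[rotated])
qed

lemma poly_vs_independent_shifted_multiples:
  fixes g :: "'a::field poly"
  assumes "g \<noteq> 0"
  shows "poly_vs.independent ((\<lambda>k. g * monom 1 k) ` {..<m})"
proof -
  have "u v = 0" if combination: "(\<Sum>v\<in>(\<lambda>k. g * monom 1 k) ` {..<m}. smult (u v) v) = 0"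
    and v: "v \<in> (\<lambda>k. g * monom 1 k) ` {..<m}" for u v
  proof -
    obtain k where "k < m" "v = g * monom 1 k" using v by auto
    have "g * (\<Sum>j<m. monom (u (g * monom 1 j)) j) = 0"
      using combination unfolding sum.reindex[OF inj_on_shifted_multiples[OF assms]]
      by (simp add: sum_distrib_left smult_monom mult_smult_right[symmetric])
    then have "coeff (\<Sum>j<m. monom (u (g * monom 1 j)) j) k = 0" using assms by simp
    then show "u v = 0" using \<open>k < m\<close> \<open>v = _\<close> by (simp add: coeff_sum)
  qed
  then show ?thesis using poly_vs.dependent_finite[of "(\<lambda>k. g * monom 1 k) ` {..<m}"] by blast
qed

lemma dim_bounded_multiples:
  fixes g :: "'a::field poly"
  assumes "g \<noteq> 0" "degree g < n"
  shows "poly_vs.dim {c. g dvd c \<and> degree c < n} = n - degree g"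
proof -
  let ?B = "(\<lambda>k. g * monom 1 k) ` {..<n - degree g}"
  have "poly_vs.dim (poly_vs.span ?B) = card ?B"
    by (rule poly_vs.dim_span_eq_card_independent[OF poly_vs_independent_shifted_multiples[OF assms(1)]])
  then show ?thesis
    unfolding poly_vs_span_shifted_multiples[OF assms] card_image[OF inj_on_shifted_multiples[OF assms(1)]]
    by simp
qed

section \<open>Embeddings of fields\<close>

locale field_embedding =
  fixes \<phi> :: "'a::field \<Rightarrow> 'b::field"
  assumes field_hom: "field_hom \<phi>"
begin

lemma hom_0 [simp]: "\<phi> 0 = 0"
  and hom_1 [simp]: "\<phi> 1 = 1"
  and hom_add [simp]: "\<phi> (x + y) = \<phi> x + \<phi> y"
  and hom_mult [simp]: "\<phi> (x * y) = \<phi> x * \<phi> y"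
  using field_hom by (simp_all add: field_hom_def)

lemma hom_uminus [simp]: "\<phi> (- x) = - \<phi> x"
  using hom_add[of "- x" x] by (simp add: eq_neg_iff_add_eq_0)

lemma hom_diff [simp]: "\<phi> (x - y) = \<phi> x - \<phi> y"
  using hom_add[of x "- y"] by simp

lemma hom_eq_0_iff [simp]: "\<phi> x = 0 \<longleftrightarrow> x = 0"
  using hom_mult[of x "inverse x"] by (cases "x = 0") auto

lemma inj_hom: "inj \<phi>"
  by (rule injI) (metis hom_diff hom_eq_0_iff right_minus_eq)

lemma hom_power [simp]: "\<phi> (x ^ k) = \<phi> x ^ k"
  by (induction k) auto

lemma hom_of_nat [simp]: "\<phi> (of_nat k) = of_nat k"
  by (induction k) auto

lemma hom_sum: "\<phi> (sum f A) = (\<Sum>x\<in>A. \<phi> (f x))"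
  by (induction A rule: infinite_finite_induct) auto

lemma hom_divide [simp]: "\<phi> (x / y) = \<phi> x / \<phi> y"
  using hom_mult[of x "inverse y"] hom_mult[of y "inverse y"]
  by (cases "y = 0") (auto simp: divide_inverse inverse_unique)

lemma coeff_map_poly_hom [simp]: "coeff (map_poly \<phi> p) k = \<phi> (coeff p k)"
  by (simp add: coeff_map_poly)

lemma degree_map_poly_hom [simp]: "degree (map_poly \<phi> p) = degree p"
  by (simp add: degree_map_poly)

lemma map_poly_hom_eq_0_iff [simp]: "map_poly \<phi> p = 0 \<longleftrightarrow> p = 0"
  by (simp add: map_poly_eq_0_iff)

lemma map_poly_hom_add [simp]: "map_poly \<phi> (p + r) = map_poly \<phi> p + map_poly \<phi> r"
  by (rule poly_eqI) simp

lemma map_poly_hom_diff [simp]: "map_poly \<phi> (p - r) = map_poly \<phi> p - map_poly \<phi> r"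
  by (rule poly_eqI) simp

lemma map_poly_hom_mult [simp]: "map_poly \<phi> (p * r) = map_poly \<phi> p * map_poly \<phi> r"
  by (rule poly_eqI) (simp add: coeff_mult hom_sum)

lemma map_poly_hom_pCons [simp]: "map_poly \<phi> (pCons a p) = pCons (\<phi> a) (map_poly \<phi> p)"
  by (simp add: map_poly_pCons)

lemma map_poly_hom_monom [simp]: "map_poly \<phi> (monom c k) = monom (\<phi> c) k"
  by (simp add: map_poly_monom)

lemma map_poly_hom_dvd_iff:
  assumes "p \<noteq> 0"
  shows "map_poly \<phi> p dvd map_poly \<phi> r \<longleftrightarrow> p dvd r"
proof
  assume dvd: "map_poly \<phi> p dvd map_poly \<phi> r"
  have "map_poly \<phi> r = map_poly \<phi> p * map_poly \<phi> (r div p) + map_poly \<phi> (r mod p)"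
    by (metis div_mult_mod_eq map_poly_hom_add map_poly_hom_mult mult.commute)
  with dvd have "map_poly \<phi> p dvd map_poly \<phi> (r mod p)"
    by (metis dvd_add_right_iff dvd_triv_left)
  moreover have "r mod p = 0 \<or> degree (r mod p) < degree p"
    using assms degree_mod_less by blast
  ultimately have "r mod p = 0"
    by (metis degree_map_poly_hom map_poly_hom_eq_0_iff dvd_imp_degree_le not_le)
  then show "p dvd r" by (simp add: mod_eq_0_iff_dvd)
qed (metis dvdE dvdI map_poly_hom_mult)

lemma hamming_weight_map_poly_hom [simp]:
  "hamming_weight (map_poly \<phi> p) = hamming_weight p"
  by (simp add: hamming_weight_def)

lemma min_poly_eqI:
  assumes monic: "lead_coeff m = 1" and root: "poly (map_poly \<phi> m) x = 0"
    and minimal: "\<And>p. p \<noteq> 0 \<Longrightarrow> poly (map_poly \<phi> p) x = 0 \<Longrightarrow> degree m \<le> degree p"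
  shows "min_poly \<phi> x = m"
  unfolding min_poly_def
proof (rule the_equality)
  fix m' assume m': "lead_coeff m' = 1 \<and> poly (map_poly \<phi> m') x = 0 \<and>
    (\<forall>p. p \<noteq> 0 \<and> poly (map_poly \<phi> p) x = 0 \<longrightarrow> degree m' \<le> degree p)"
  have "m \<noteq> 0" "m' \<noteq> 0" using monic m' by auto
  then have deg: "degree m' = degree m" using m' minimal root by (meson le_antisym)
  show "m' = m"
  proof (rule ccontr)
    assume "m' \<noteq> m"
    then have "degree m \<le> degree (m' - m)" using m' root by (intro minimal) auto
    moreover have "degree (m' - m) \<le> degree m" using deg by (simp add: degree_diff_le)
    moreover have "coeff (m' - m) (degree m) = 0" using monic m' deg by simp
    ultimately have "lead_coeff (m' - m) = 0" by simp
    then show False using \<open>m' \<noteq> m\<close> by (simp only: leading_coeff_0_iff right_minus_eq)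
  qed
qed (use assms in auto)

lemma degree_ge_2_if_root_not_in_range:
  assumes "x \<notin> range \<phi>" "p \<noteq> 0" "poly (map_poly \<phi> p) x = 0"
  shows "2 \<le> degree p"
proof (rule ccontr)
  assume "\<not> 2 \<le> degree p"
  then have "p = [:coeff p 0, coeff p 1:]"
    by (intro poly_eqI) (auto simp: coeff_pCons coeff_eq_0 split: nat.split)
  then obtain a b where p: "p = [:a, b:]" by blast
  then have root: "\<phi> a + x * \<phi> b = 0" using assms(3) by simp
  show False
  proof (cases "b = 0")
    case True
    then show False using root p assms(2) by simp
  next
    case False
    then have "x = \<phi> (- a / b)" using root by (simp add: eq_neg_iff_add_eq_0 field_simps)
    then show False using assms(1) by blast
  qed
qed

end

locale finite_field_embedding = field_embedding \<phi>
  for \<phi> :: "'a::{field,finite} \<Rightarrow> 'b::field"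
begin

lemma add_power_card: "(x + y) ^ CARD('a) = x ^ CARD('a) + (y::'b) ^ CARD('a)"
proof -
  have "(of_nat (CARD('a) choose k) :: 'b) = 0" if "0 < k" "k < CARD('a)" for k
    using of_nat_card_choose_eq_0[OF that] hom_of_nat[of "CARD('a) choose k"] by simp
  then have "(x + y) ^ CARD('a) = (\<Sum>k\<in>{0, CARD('a)}. of_nat (CARD('a) choose k) * x ^ k * y ^ (CARD('a) - k))"
    unfolding binomial_ring by (intro sum.mono_neutral_right) auto
  then show ?thesis by (simp add: add.commute)
qed

lemma range_hom_eq_fixed_points: "range \<phi> = {z. z ^ CARD('a) = z}"
proof (rule card_seteq)
  let ?F = "{z::'b. z ^ CARD('a) = z}"
  let ?P = "monom 1 CARD('a) - [:0, 1:] :: 'b poly"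
  have "coeff ?P CARD('a) = 1" using card_field_ge_2[where 'a='a] by (simp add: coeff_pCons split: nat.split)
  then have "?P \<noteq> 0" by (metis coeff_0 zero_neq_one)
  have "degree ?P \<le> CARD('a)"
    using card_field_ge_2[where 'a='a] by (intro degree_diff_le) (auto simp: degree_monom_le)
  have roots: "?F = {z. poly ?P z = 0}" by (simp add: poly_monom)
  show "finite ?F"
    unfolding roots using poly_roots_finite[OF \<open>?P \<noteq> 0\<close>] .
  have "card ?F \<le> CARD('a)"
    unfolding roots using card_poly_roots_bound[OF \<open>?P \<noteq> 0\<close>] \<open>degree ?P \<le> _\<close> by linarith
  then show "card ?F \<le> card (range \<phi>)"
    by (simp add: card_image inj_hom)
  show "range \<phi> \<subseteq> ?F"
    by (auto simp flip: hom_power simp: power_card_eq_self)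
qed

end

section \<open>The negacyclic BCH code of length (q + 1) / 2\<close>

locale negacyclic_bch = finite_field_embedding \<phi>
  for \<phi> :: "'a::{field_gcd,finite} \<Rightarrow> 'b::field" +
  fixes q n :: nat and \<beta> :: 'b
  assumes card_base: "CARD('a) = q"
    and q_plus_1: "q + 1 = 2 * n"
    and beta_power_eq_1_iff: "\<beta> ^ j = 1 \<longleftrightarrow> 2 * n dvd j"
begin

abbreviation modulus :: "'a poly" where
  "modulus \<equiv> monom 1 n + 1"

lemma n_ge_2: "2 \<le> n"
  using card_field_ge_2[where 'a='a] card_base q_plus_1 by simp

lemma degree_modulus: "degree modulus = n"
  using n_ge_2 by (simp add: degree_add_eq_left degree_monom_eq)

lemma odd_q: "odd q"
  using q_plus_1 by presburger

lemma beta_nonzero [simp]: "\<beta> \<noteq> 0"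
  using beta_power_eq_1_iff[of "2 * n"] n_ge_2 by (auto simp: power_0_left)

lemma beta_power_n: "\<beta> ^ n = -1"
proof -
  have "(\<beta> ^ n - 1) * (\<beta> ^ n + 1) = \<beta> ^ n * \<beta> ^ n - 1"
    by (simp add: algebra_simps)
  also have "\<beta> ^ n * \<beta> ^ n = 1"
    using beta_power_eq_1_iff[of "2 * n"] by (simp add: mult_2 power_add)
  finally show ?thesis
    using beta_power_eq_1_iff[of n] n_ge_2 by (auto simp: add_eq_0_iff2)
qed

lemma beta_power_mult_q: "\<beta> ^ i * \<beta> ^ (i * q) = 1"
proof -
  have "\<beta> ^ i * \<beta> ^ (i * q) = \<beta> ^ ((q + 1) * i)"
    by (simp add: algebra_simps power_add)
  then show ?thesis unfolding q_plus_1 by (simp add: beta_power_eq_1_iff)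
qed

lemma beta_power_mult_q_q: "\<beta> ^ (i * q * q) = \<beta> ^ i"
proof -
  have "\<beta> ^ (i * q) * \<beta> ^ (i * q * q) = \<beta> ^ (i * q) * \<beta> ^ i"
    using beta_power_mult_q[of i] beta_power_mult_q[of "i * q"] by (simp add: mult.commute)
  then show ?thesis by simp
qed

lemma beta_power_not_in_range:
  assumes "0 < i" "i < n"
  shows "\<beta> ^ i \<notin> range \<phi>"
proof
  assume "\<beta> ^ i \<in> range \<phi>"
  then have "\<beta> ^ (i * q) = \<beta> ^ i"
    using range_hom_eq_fixed_points by (simp add: card_base power_mult)
  then have "\<beta> ^ (2 * i) = 1"
    using beta_power_mult_q[of i] by (simp add: mult_2 power_add)
  then have "n dvd i" by (simp add: beta_power_eq_1_iff)
  then show False using assms by (simp add: nat_dvd_not_less)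
qed

lemma inj_on_beta_square_power: "inj_on (\<lambda>k. (\<beta> ^ 2) ^ k) {..<n}"
proof (rule linorder_inj_onI')
  fix a b assume "a \<in> {..<n}" "b \<in> {..<n}" "a < b"
  have "(\<beta> ^ 2) ^ b = (\<beta> ^ 2) ^ a * \<beta> ^ (2 * (b - a))"
    using \<open>a < b\<close> by (simp add: power_mult flip: power_add)
  moreover have "\<beta> ^ (2 * (b - a)) \<noteq> 1"
    using \<open>a < b\<close> \<open>b \<in> {..<n}\<close> by (simp add: beta_power_eq_1_iff nat_dvd_not_less)
  ultimately show "(\<beta> ^ 2) ^ a \<noteq> (\<beta> ^ 2) ^ b" by auto
qed

text \<open>The polynomial \<open>(x - \<beta>^i)(x - \<beta>^(i q))\<close> pulled back to the base field: its middle
  coefficient has a preimage under \<open>\<phi>\<close> because it is fixed by \<open>x \<mapsto> x^q\<close>.\<close>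

definition conj_poly :: "nat \<Rightarrow> 'a poly" where
  "conj_poly i = [:1, - inv \<phi> (\<beta> ^ i + \<beta> ^ (i * q)), 1:]"

lemma map_poly_conj_poly:
  "map_poly \<phi> (conj_poly i) = [:- (\<beta> ^ i), 1:] * [:- (\<beta> ^ (i * q)), 1:]"
proof -
  have "(\<beta> ^ i + \<beta> ^ (i * q)) ^ q = \<beta> ^ i + \<beta> ^ (i * q)"
    using add_power_card[of "\<beta> ^ i" "\<beta> ^ (i * q)"] beta_power_mult_q_q[of i]
    by (simp add: card_base power_mult add.commute)
  then have "\<phi> (inv \<phi> (\<beta> ^ i + \<beta> ^ (i * q))) = \<beta> ^ i + \<beta> ^ (i * q)"
    using range_hom_eq_fixed_points by (simp add: card_base f_inv_into_f)
  then show ?thesis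
    using beta_power_mult_q[of i] by (simp add: conj_poly_def algebra_simps)
qed

lemma conj_poly_roots:
  "poly (map_poly \<phi> (conj_poly i)) (\<beta> ^ i) = 0"
  "poly (map_poly \<phi> (conj_poly i)) (\<beta> ^ (i * q)) = 0"
  by (simp_all add: map_poly_conj_poly)

lemma min_poly_beta_power:
  assumes "0 < i" "i < n"
  shows "min_poly \<phi> (\<beta> ^ i) = conj_poly i"
proof (rule min_poly_eqI)
  show "lead_coeff (conj_poly i) = 1" by (simp add: conj_poly_def)
  show "poly (map_poly \<phi> (conj_poly i)) (\<beta> ^ i) = 0" by (rule conj_poly_roots)
  show "degree (conj_poly i) \<le> degree p" if "p \<noteq> 0" "poly (map_poly \<phi> p) (\<beta> ^ i) = 0" for p
    using degree_ge_2_if_root_not_in_range[OF beta_power_not_in_range[OF assms] that]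
    by (simp add: conj_poly_def)
qed

lemma conj_poly_dvd_modulus:
  assumes "odd i" "i < n"
  shows "conj_poly i dvd modulus"
proof -
  let ?F = "map_poly \<phi> modulus"
  have root: "poly ?F (\<beta> ^ j) = 0" if "odd j" for j
  proof -
    have "(\<beta> ^ j) ^ n = (\<beta> ^ n) ^ j" by (simp flip: power_mult add: mult.commute)
    then show ?thesis using that by (simp add: poly_monom beta_power_n)
  qed
  have "\<beta> ^ i \<noteq> \<beta> ^ (i * q)"
    using beta_power_not_in_range[of i] assms range_hom_eq_fixed_points
    by (auto simp: card_base power_mult odd_pos)
  obtain h where h: "?F = [:- (\<beta> ^ i), 1:] * h"
    using root[OF assms(1)] unfolding poly_eq_0_iff_dvd by (rule dvdE)
  then have "poly h (\<beta> ^ (i * q)) = 0"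
    using root[of "i * q"] assms(1) odd_q \<open>\<beta> ^ i \<noteq> _\<close> by simp
  then have "[:- (\<beta> ^ i), 1:] * [:- (\<beta> ^ (i * q)), 1:] dvd ?F"
    unfolding h poly_eq_0_iff_dvd by (rule mult_dvd_mono[OF dvd_refl])
  moreover have "conj_poly i \<noteq> 0" by (simp add: conj_poly_def)
  ultimately show ?thesis by (simp flip: map_poly_hom_dvd_iff add: map_poly_conj_poly)
qed

context
  fixes \<delta> :: nat
  assumes delta_ge_2: "2 \<le> \<delta>" and delta_le: "2 * \<delta> - 1 \<le> n"
begin

abbreviation generator :: "'a poly" where
  "generator \<equiv> negacyclic_generator \<phi> \<beta> \<delta>"

abbreviation bch_code :: "'a poly set" where
  "bch_code \<equiv> negacyclic_BCH \<phi> \<beta> n \<delta>"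

lemma generator_eq_Lcm_conj_poly:
  "generator = Lcm ((\<lambda>i. conj_poly (1 + 2 * i)) ` {0..\<delta> - 2})"
  unfolding negacyclic_generator_def
  by (intro arg_cong[where f = Lcm] image_cong refl min_poly_beta_power)
    (use delta_le delta_ge_2 in auto)

lemma conj_poly_dvd_generator: "i \<le> \<delta> - 2 \<Longrightarrow> conj_poly (1 + 2 * i) dvd generator"
  unfolding generator_eq_Lcm_conj_poly by (rule dvd_Lcm) auto

lemma generator_dvd_modulus: "generator dvd modulus"
  unfolding generator_eq_Lcm_conj_poly
  by (rule Lcm_least) (use delta_le delta_ge_2 in \<open>auto intro!: conj_poly_dvd_modulus\<close>)

lemma generator_nonzero: "generator \<noteq> 0"
  using generator_dvd_modulus degree_modulus n_ge_2 by auto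

lemma degree_generator_le: "degree generator \<le> 2 * (\<delta> - 1)"
proof -
  have "generator dvd (\<Prod>i\<in>{0..\<delta> - 2}. conj_poly (1 + 2 * i))"
    unfolding generator_eq_Lcm_conj_poly by (rule Lcm_least) (auto intro: dvd_prodI)
  moreover have "(\<Prod>i\<in>{0..\<delta> - 2}. conj_poly (1 + 2 * i)) \<noteq> 0"
    by (simp add: conj_poly_def)
  ultimately have "degree generator \<le> (\<Sum>i\<in>{0..\<delta> - 2}. degree (conj_poly (1 + 2 * i)))"
    by (subst degree_prod_eq_sum_degree[symmetric]) (auto simp: conj_poly_def intro: dvd_imp_degree_le)
  also have "\<dots> = 2 * (\<delta> - 1)" using delta_ge_2 by (simp add: conj_poly_def)
  finally show ?thesis .
qed

lemma generator_roots:
  assumes "i \<le> \<delta> - 2"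
  shows "poly (map_poly \<phi> generator) (\<beta> ^ (1 + 2 * i)) = 0"
    and "poly (map_poly \<phi> generator) (\<beta> ^ ((1 + 2 * i) * q)) = 0"
proof -
  obtain h where "generator = conj_poly (1 + 2 * i) * h"
    using conj_poly_dvd_generator[OF assms] by (rule dvdE)
  then have "map_poly \<phi> generator = map_poly \<phi> (conj_poly (1 + 2 * i)) * map_poly \<phi> h"
    by simp
  then show "poly (map_poly \<phi> generator) (\<beta> ^ (1 + 2 * i)) = 0"
    and "poly (map_poly \<phi> generator) (\<beta> ^ ((1 + 2 * i) * q)) = 0"
    by (simp_all only: poly_mult conj_poly_roots mult_zero_left)
qed

text \<open>The roots \<open>\<beta>^-(2\<delta>-3), ..., \<beta>^-1, \<beta>^1, ..., \<beta>^(2\<delta>-3)\<close> of the generator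
  form a run of consecutive powers of \<open>\<beta>^2\<close>, as the BCH bound requires.\<close>

lemma generator_consecutive_roots:
  assumes "k < 2 * \<delta> - 2"
  shows "poly (map_poly \<phi> generator) (\<beta> ^ (2 * n - (2 * \<delta> - 3)) * (\<beta> ^ 2) ^ k) = 0"
proof -
  define e where "e = 2 * n - (2 * \<delta> - 3) + 2 * k"
  have e: "\<beta> ^ (2 * n - (2 * \<delta> - 3)) * (\<beta> ^ 2) ^ k = \<beta> ^ e"
    by (simp add: e_def power_add power_mult)
  show ?thesis
  proof (cases "k \<le> \<delta> - 2")
    case True
    define j where "j = 1 + 2 * (\<delta> - 2 - k)"
    have "j + e = 2 * n" using True delta_ge_2 delta_le by (simp add: e_def j_def)
    then have "\<beta> ^ j * \<beta> ^ e = 1" by (simp add: beta_power_eq_1_iff flip: power_add)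
    then have "\<beta> ^ j * \<beta> ^ e = \<beta> ^ j * \<beta> ^ (j * q)" by (simp add: beta_power_mult_q)
    then have "\<beta> ^ e = \<beta> ^ (j * q)" by simp
    then show ?thesis unfolding e j_def using generator_roots(2)[of "\<delta> - 2 - k"] by simp
  next
    case False
    define j where "j = 1 + 2 * (k - (\<delta> - 1))"
    have "e = 2 * n + j" using False assms delta_le by (simp add: e_def j_def)
    then have "\<beta> ^ e = \<beta> ^ j" by (simp add: power_add beta_power_eq_1_iff)
    moreover have "k - (\<delta> - 1) \<le> \<delta> - 2" using assms by simp
    ultimately show ?thesis unfolding e j_def using generator_roots(1)[of "k - (\<delta> - 1)"] by simp
  qed
qed

lemma degree_generator: "degree generator = 2 * (\<delta> - 1)"
proof -
  let ?roots = "(\<lambda>k. \<beta> ^ (2 * n - (2 * \<delta> - 3)) * (\<beta> ^ 2) ^ k) ` {..<2 * \<delta> - 2}"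
  have "inj_on (\<lambda>k. (\<beta> ^ 2) ^ k) {..<2 * \<delta> - 2}"
    using inj_on_beta_square_power by (rule inj_on_subset) (use delta_le delta_ge_2 in auto)
  then have "card ?roots = 2 * \<delta> - 2"
    by (subst card_image) (auto simp: inj_on_def)
  moreover have "card ?roots \<le> card {x. poly (map_poly \<phi> generator) x = 0}"
    using generator_consecutive_roots generator_nonzero
    by (intro card_mono poly_roots_finite) auto
  moreover have "card {x. poly (map_poly \<phi> generator) x = 0} \<le> degree generator"
    using card_poly_roots_bound[of "map_poly \<phi> generator"] generator_nonzero by simp
  ultimately show ?thesis using degree_generator_le by linarith
qed

lemma bch_code_eq_multiples: "bch_code = {c. generator dvd c \<and> degree c < n}"
  unfolding negacyclic_BCH_def
  using mod_multiples_eq_bounded_multiples[OF generator_dvd_modulus] degree_modulus n_ge_2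
  by simp

lemma code_dim_bch_code: "code_dim bch_code = n - 2 * (\<delta> - 1)"
  unfolding code_dim_def bch_code_eq_multiples
  using dim_bounded_multiples[OF generator_nonzero, of n] degree_generator delta_le delta_ge_2
  by simp

lemma hamming_weight_bch_code:
  assumes "c \<in> bch_code" "c \<noteq> 0"
  shows "2 * \<delta> - 1 \<le> hamming_weight c"
proof -
  have "generator dvd c" "degree c < n" using assms(1) bch_code_eq_multiples by auto
  have "2 * \<delta> - 2 < hamming_weight (map_poly \<phi> c)"
  proof (rule bch_bound[OF inj_on_beta_square_power])
    fix k assume "k < 2 * \<delta> - 2"
    then have "poly (map_poly \<phi> generator) (\<beta> ^ (2 * n - (2 * \<delta> - 3)) * (\<beta> ^ 2) ^ k) = 0"
      by (rule generator_consecutive_roots)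
    moreover obtain h where "c = generator * h"
      using \<open>generator dvd c\<close> by (rule dvdE)
    ultimately show "poly (map_poly \<phi> c) (\<beta> ^ (2 * n - (2 * \<delta> - 3)) * (\<beta> ^ 2) ^ k) = 0"
      by simp
  qed (use assms \<open>degree c < n\<close> in auto)
  then show ?thesis by simp
qed

lemma min_dist_bch_code: "min_dist bch_code = 2 * \<delta> - 1"
proof (rule min_dist_eqI)
  show "c - c' \<in> bch_code" if "c \<in> bch_code" "c' \<in> bch_code" for c c'
    using that degree_diff_le_max[of c c'] by (auto simp: bch_code_eq_multiples)
  show "generator \<in> bch_code"
    using degree_generator delta_le delta_ge_2 by (simp add: bch_code_eq_multiples)
  show "hamming_weight generator = 2 * \<delta> - 1"
    using hamming_weight_bch_code[OF \<open>generator \<in> bch_code\<close> generator_nonzero]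
      hamming_weight_le_Suc_degree[of generator] degree_generator delta_ge_2 by simp
qed (use hamming_weight_bch_code generator_nonzero bch_code_eq_multiples in auto)

end

end

lemma mult_ord_q_plus_1:
  assumes "2 \<le> q"
  shows "mult_ord (q + 1) q = 2"
proof -
  have "q ^ 2 = 1 + (q + 1) * (q - 1)"
    using assms by (simp add: power2_eq_square algebra_simps)
  then have "q ^ 2 mod (q + 1) = (1 + (q + 1) * (q - 1)) mod (q + 1)" by (simp only:)
  also have "\<dots> = 1 mod (q + 1)" by (rule mod_mult_self2)
  finally have "q ^ 2 mod (q + 1) = 1 mod (q + 1)" .
  moreover have "q ^ 1 mod (q + 1) \<noteq> 1 mod (q + 1)" using assms by simp
  ultimately have "(LEAST d. 0 < d \<and> q ^ d mod (q + 1) = 1 mod (q + 1)) = 2"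
  proof (intro Least_equality; clarify?)
    fix d assume "0 < d" "q ^ d mod (q + 1) = 1 mod (q + 1)"
    with \<open>q ^ 1 mod (q + 1) \<noteq> 1 mod (q + 1)\<close> show "2 \<le> d" by (cases "d = 1") auto
  qed simp
  then show ?thesis by (simp add: mult_ord_def)
qed

lemma power_order_q_plus_1:
  fixes \<alpha> :: "'a::{field,finite}"
  assumes "2 \<le> q" "CARD('a) = q ^ mult_ord (q + 1) q" "primitive_element \<alpha>"
  shows "(\<alpha> ^ ((q ^ mult_ord (q + 1) q - 1) div (q + 1))) ^ j = 1 \<longleftrightarrow> (q + 1) dvd j"
proof -
  have factor: "q ^ 2 - 1 = (q - 1) * (q + 1)"
    using assms(1) by (simp add: power2_eq_square algebra_simps)
  then have "CARD('a) - 1 = (q - 1) * (q + 1)"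
    using assms(2) mult_ord_q_plus_1[OF assms(1)] by simp
  moreover have "(q ^ 2 - 1) div (q + 1) = q - 1"
    unfolding factor by (rule nonzero_mult_div_cancel_right) simp
  ultimately show ?thesis
    using primitive_element_power_order[OF assms(3)] mult_ord_q_plus_1[OF assms(1)] by simp
qed

theorem proposition9:
  fixes q n \<delta> :: nat and \<phi> :: "'a::{field_gcd,finite} \<Rightarrow> 'b::{field,finite}"
    and \<alpha> \<beta> :: 'b
  assumes "CARD('a) = q" and "odd q"
    and "n = (q + 1) div 2"
    and "2 \<le> \<delta>" and "\<delta> \<le> (q + 3) div 4"
    and "CARD('b) = q ^ mult_ord (2 * n) q"
    and "field_hom \<phi>"
    and "primitive_element \<alpha>"
    and "\<beta> = \<alpha> ^ ((q ^ mult_ord (2 * n) q - 1) div (2 * n))"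
  shows "code_dim (negacyclic_BCH \<phi> \<beta> n \<delta>) = n - 2 * (\<delta> - 1)
    \<and> min_dist (negacyclic_BCH \<phi> \<beta> n \<delta>) = 2 * \<delta> - 1
    \<and> min_dist (negacyclic_BCH \<phi> \<beta> n \<delta>) = n - code_dim (negacyclic_BCH \<phi> \<beta> n \<delta>) + 1"
proof -
  have "2 \<le> q" using assms(1) card_field_ge_2[where 'a='a] by simp
  have two_n: "2 * n = q + 1" using assms(2,3) by presburger
  have "\<beta> ^ j = 1 \<longleftrightarrow> 2 * n dvd j" for j
    using power_order_q_plus_1[OF \<open>2 \<le> q\<close> _ assms(8)] assms(6,9) by (simp add: two_n)
  then interpret negacyclic_bch \<phi> q n \<beta>
    using assms(1,7) two_n by unfold_locales auto
  have "2 * \<delta> - 1 \<le> n" using assms(2-5) by presburger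
  then show ?thesis
    using code_dim_bch_code min_dist_bch_code \<open>2 \<le> \<delta>\<close> by simp
qed

end
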